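(* Let $U$, the critical points $x_i$ ($i=1,\dots,k$, local minima) and $x_{i+1/2}$ (local maxima), the Peierls barrier $h$, and the right/left barriers $h_R,h_L$ be as in the context. Let $W_1,\dots,W_k$ be real numbers satisfying the discrete weak KAM problem $W_i=\min_{j=1,\dots,k}\{W_j+h(x_i;x_j)\}$ for all $i$, and define $W(x)=\min_{j=1,\dots,k}\{W_j+h(x;x_j)\}$ for $x\in\mathbb{S}^1$. Then for every $i=1,\dots,k$ and every $x\in[x_i,x_{i+1}]$ (lifted to $\mathbb{R}$, with $x_{k+1}=x_1+1$, $W_{k+1}=W_1$), $$W(x)=\min\{W_i+h_R(x;x_i),\ W_{i+1}+h_L(x;x_{i+1})\}.$$ Consequently, at each local maximum $x_{i+1/2}$ there is at most one flat connection (a point where $W$ passes between a branch of the form $U+\mathrm{const}$ and a constant branch), located either on the left of $x_{i+1/2}$ or on the right of $x_{i+1/2}$.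
   Context: $\mathbb{S}^1=\mathbb{R}/\mathbb{Z}$; $U:\mathbb{R}\to\mathbb{R}$ smooth, skew periodic ($U(x)=\tilde U(x)-\bar bx$, $\tilde U$ smooth 1-periodic), whose critical points in one period are exactly $k\ge1$ local minima $x_1,\dots,x_k$ interleaved with $k$ local maxima, $0=x_{1/2}<x_1<x_{3/2}<\dots<x_k<x_{k+1/2}=1$, and $x_{i+\ell k}=x_i+\ell$. $L(s,x)=\frac14(s+U'(x))^2$. Peierls barrier: $h(y;x)=\liminf_{T\to\infty}\inf\{\int_0^TL(\dot\gamma,\gamma)dt:\gamma:[0,T]\to\mathbb{S}^1$ absolutely continuous, $\gamma(0)=x,\gamma(T)=y\}$. Right barrier: for $y\in[x_i,x_{i+k}]$, $h_R(y;x_i)=\inf\{\int_0^TL(\dot\gamma,\gamma)dt:T\ge0,\gamma:[0,T]\to\mathbb{R}$ absolutely continuous, $\gamma(0)=x_i,\gamma(T)=y\}$; left barrier $h_L(y;x_i)$ for $y\in[x_{i-k},x_i]$ is given by the same formula. *)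

theory Defs
  imports "HOL-Analysis.Analysis"
begin

definition smooth_real :: "(real \<Rightarrow> real) \<Rightarrow> bool" where
  "smooth_real f \<longleftrightarrow> (\<forall>n x. ((deriv ^^ n) f) differentiable (at x))"

definition abs_cont_on :: "real set \<Rightarrow> (real \<Rightarrow> real) \<Rightarrow> bool" where
  "abs_cont_on S f \<longleftrightarrow>
     (\<forall>\<epsilon>>0. \<exists>\<delta>>0. \<forall>(n::nat) (a::nat \<Rightarrow> real) b.
        (\<forall>i<n. a i \<le> b i \<and> {a i..b i} \<subseteq> S) \<and>
        (\<forall>i<n. \<forall>j<n. i \<noteq> j \<longrightarrow> b i \<le> a j \<or> b j \<le> a i) \<and>
        (\<Sum>i<n. b i - a i) < \<delta>
        \<longrightarrow> (\<Sum>i<n. \<bar>f (b i) - f (a i)\<bar>) < \<epsilon>)"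

definition loc_min :: "(real \<Rightarrow> real) \<Rightarrow> real \<Rightarrow> bool" where
  "loc_min f x \<longleftrightarrow> (\<exists>e>0. \<forall>y. \<bar>y - x\<bar> < e \<longrightarrow> f x \<le> f y)"

definition loc_max :: "(real \<Rightarrow> real) \<Rightarrow> real \<Rightarrow> bool" where
  "loc_max f x \<longleftrightarrow> (\<exists>e>0. \<forall>y. \<bar>y - x\<bar> < e \<longrightarrow> f y \<le> f x)"

definition lagr :: "(real \<Rightarrow> real) \<Rightarrow> real \<Rightarrow> real \<Rightarrow> real" where
  "lagr U s x = (s + deriv U x)^2 / 4"

definition admissible :: "(real \<Rightarrow> real) \<Rightarrow> real \<Rightarrow> (real \<Rightarrow> real) \<Rightarrow> bool" where
  "admissible U T \<gamma> \<longleftrightarrow> T \<ge> 0 \<and> abs_cont_on {0..T} \<gamma> \<and>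
     (\<lambda>t. lagr U (vector_derivative \<gamma> (at t)) (\<gamma> t)) integrable_on {0..T}"

definition action :: "(real \<Rightarrow> real) \<Rightarrow> real \<Rightarrow> (real \<Rightarrow> real) \<Rightarrow> real" where
  "action U T \<gamma> = integral {0..T} (\<lambda>t. lagr U (vector_derivative \<gamma> (at t)) (\<gamma> t))"

text \<open>Minimal action over time exactly T between x and y on the circle R/Z:
  curves on S^1 are represented by their lifts to R, which start at the lift x
  and end at some lift y + m (m integer) of y.\<close>
definition circ_min_action :: "(real \<Rightarrow> real) \<Rightarrow> real \<Rightarrow> real \<Rightarrow> real \<Rightarrow> real" where
  "circ_min_action U T y x =
     Inf {action U T \<gamma> | \<gamma>. admissible U T \<gamma> \<and> \<gamma> 0 = x \<and> (\<exists>m::int. \<gamma> T = y + of_int m)}"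

definition peierls :: "(real \<Rightarrow> real) \<Rightarrow> real \<Rightarrow> real \<Rightarrow> ereal" where
  "peierls U y x = Liminf at_top (\<lambda>T. ereal (circ_min_action U T y x))"

text \<open>Right/left barrier h_R(y;x), h_L(y;x): infimum of the action over all times
  T \<ge> 0 and curves in R from x to y (same formula for both; they differ only in
  the range of y where they are used).\<close>
definition line_barrier :: "(real \<Rightarrow> real) \<Rightarrow> real \<Rightarrow> real \<Rightarrow> real" where
  "line_barrier U y x =
     Inf {action U T \<gamma> | T \<gamma>. admissible U T \<gamma> \<and> \<gamma> 0 = x \<and> \<gamma> T = y}"

abbreviation hR :: "(real \<Rightarrow> real) \<Rightarrow> real \<Rightarrow> real \<Rightarrow> real" where
  "hR \<equiv> line_barrier"

abbreviation hL :: "(real \<Rightarrow> real) \<Rightarrow> real \<Rightarrow> real \<Rightarrow> real" where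
  "hL \<equiv> line_barrier"

text \<open>Standing assumptions on U and its critical points: xm i = x_i (local minima),
  xM i = x_{i+1/2} (local maxima), for integer i.\<close>
definition skew_periodic_setting ::
  "(real \<Rightarrow> real) \<Rightarrow> nat \<Rightarrow> (int \<Rightarrow> real) \<Rightarrow> (int \<Rightarrow> real) \<Rightarrow> bool" where
  "skew_periodic_setting U k xm xM \<longleftrightarrow>
     k \<ge> 1 \<and> smooth_real U \<and>
     (\<exists>Ut b. smooth_real Ut \<and> (\<forall>x. Ut (x + 1) = Ut x) \<and> (\<forall>x. U x = Ut x - b * x)) \<and>
     xM 0 = 0 \<and>
     (\<forall>i. xM (i - 1) < xm i \<and> xm i < xM i) \<and>
     (\<forall>i. xm (i + int k) = xm i + 1 \<and> xM (i + int k) = xM i + 1) \<and>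
     (\<forall>i. loc_min U (xm i) \<and> loc_max U (xM i)) \<and>
     (\<forall>x. deriv U x = 0 \<longleftrightarrow> (\<exists>i. x = xm i \<or> x = xM i))"

end

theory Submission
  imports Defs "HOL-Library.Periodic_Fun"
begin

(* Upper bound: a curve from x_i to x may be preceded by an arbitrarily long rest at the
   critical point x_i, which costs nothing since L(0, x_i) = 0; hence h(x;x_i) <= h_R(x;x_i),
   and likewise h(x;x_{i+1}) <= h_L(x;x_{i+1}).
   Lower bound: lift a curve of the Peierls problem, starting at x_j, whose endpoint is a lift
   of x in [x_i, x_{i+1}]. No minimum lies strictly between x_i and x_{i+1}, so the curve passes
   through the corresponding lift of x_i or of x_{i+1}. Cutting it there bounds its action from
   below by h(x_i;x_j) + h_R(x;x_i) or by h(x_{i+1};x_j) + h_L(x;x_{i+1}), and the weak KAM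
   relation W_i <= W_j + h(x_i;x_j) concludes. *)

lemma abs_cont_on_add_const: "abs_cont_on S f \<Longrightarrow> abs_cont_on S (\<lambda>t. f t + c)"
  unfolding abs_cont_on_def by simp

lemma abs_cont_on_compose_monotone_nonexpansive:
  assumes ac: "abs_cont_on {p..q} g"
    and \<phi>_mono: "\<And>x y. x \<le> y \<Longrightarrow> \<phi> x \<le> \<phi> y"
    and \<phi>_nonexpansive: "\<And>x y. x \<le> y \<Longrightarrow> \<phi> y - \<phi> x \<le> y - x"
    and \<phi>_into: "\<And>x. x \<in> S \<Longrightarrow> \<phi> x \<in> {p..q}"
  shows "abs_cont_on S (\<lambda>t. g (\<phi> t))"
  unfolding abs_cont_on_def
proof (intro allI impI)
  fix e :: real assume "e > 0"
  obtain d where d: "d > 0" and H: "\<forall>n a b. (\<forall>i<n. a i \<le> b i \<and> {a i..b i} \<subseteq> {p..q}) \<and>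
        (\<forall>i<n. \<forall>j<n. i \<noteq> j \<longrightarrow> b i \<le> a j \<or> b j \<le> a i) \<and>
        (\<Sum>i<(n::nat). b i - a i) < d \<longrightarrow> (\<Sum>i<n. \<bar>g (b i) - g (a i)\<bar>) < e"
    using ac \<open>e > 0\<close> unfolding abs_cont_on_def by blast
  show "\<exists>d>0. \<forall>n a b. (\<forall>i<n. a i \<le> b i \<and> {a i..b i} \<subseteq> S) \<and>
        (\<forall>i<n. \<forall>j<n. i \<noteq> j \<longrightarrow> b i \<le> a j \<or> b j \<le> a i) \<and>
        (\<Sum>i<(n::nat). b i - a i) < d \<longrightarrow> (\<Sum>i<n. \<bar>g (\<phi> (b i)) - g (\<phi> (a i))\<bar>) < e"
  proof (intro exI[of _ d] conjI allI impI d)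
    fix n :: nat and a b :: "nat \<Rightarrow> real"
    assume A: "(\<forall>i<n. a i \<le> b i \<and> {a i..b i} \<subseteq> S) \<and>
        (\<forall>i<n. \<forall>j<n. i \<noteq> j \<longrightarrow> b i \<le> a j \<or> b j \<le> a i) \<and> (\<Sum>i<n. b i - a i) < d"
    have "\<forall>i<n. \<phi> (a i) \<le> \<phi> (b i) \<and> {\<phi> (a i)..\<phi> (b i)} \<subseteq> {p..q}"
    proof (intro allI impI conjI)
      fix i assume "i < n"
      then have ab: "a i \<le> b i" and "{a i..b i} \<subseteq> S" using A by auto
      show "\<phi> (a i) \<le> \<phi> (b i)" using ab by (rule \<phi>_mono)
      have "\<phi> (a i) \<in> {p..q}" "\<phi> (b i) \<in> {p..q}"
        using \<phi>_into ab \<open>{a i..b i} \<subseteq> S\<close> by auto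
      then show "{\<phi> (a i)..\<phi> (b i)} \<subseteq> {p..q}" by auto
    qed
    moreover have "\<forall>i<n. \<forall>j<n. i \<noteq> j \<longrightarrow> \<phi> (b i) \<le> \<phi> (a j) \<or> \<phi> (b j) \<le> \<phi> (a i)"
      using A by (metis \<phi>_mono)
    moreover have "(\<Sum>i<n. \<phi> (b i) - \<phi> (a i)) \<le> (\<Sum>i<n. b i - a i)"
      by (rule sum_mono) (use A \<phi>_nonexpansive in auto)
    ultimately show "(\<Sum>i<n. \<bar>g (\<phi> (b i)) - g (\<phi> (a i))\<bar>) < e"
      using A by (intro H[rule_format]) auto
  qed
qed

lemma abs_cont_on_imp_continuous_on:
  assumes "abs_cont_on {p..q} g"
  shows "continuous_on {p..q} g"
  unfolding continuous_on_iff
proof (intro ballI allI impI)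
  fix x e assume x: "x \<in> {p..q}" and e: "(0::real) < e"
  obtain d where d: "d > 0" and H: "\<forall>n a b. (\<forall>i<n. a i \<le> b i \<and> {a i..b i} \<subseteq> {p..q}) \<and>
        (\<forall>i<n. \<forall>j<n. i \<noteq> j \<longrightarrow> b i \<le> a j \<or> b j \<le> a i) \<and>
        (\<Sum>i<(n::nat). b i - a i) < d \<longrightarrow> (\<Sum>i<n. \<bar>g (b i) - g (a i)\<bar>) < e"
    using assms e unfolding abs_cont_on_def by blast
  show "\<exists>d>0. \<forall>y\<in>{p..q}. dist y x < d \<longrightarrow> dist (g y) (g x) < e"
  proof (intro exI[of _ d] conjI ballI impI d)
    fix y assume "y \<in> {p..q}" and "dist y x < d"
    then have "(\<Sum>i<Suc 0. \<bar>g (max x y) - g (min x y)\<bar>) < e"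
      using x by (intro H[rule_format]) (auto simp: dist_real_def)
    then show "dist (g y) (g x) < e"
      by (auto simp: dist_real_def max_def min_def abs_minus_commute split: if_splits)
  qed
qed

lemma abs_cont_on_affine: "abs_cont_on S (\<lambda>t. x0 + v * t)"
  unfolding abs_cont_on_def
proof (intro allI impI)
  fix e :: real assume e: "e > 0"
  show "\<exists>d>0. \<forall>n a b. (\<forall>i<n. a i \<le> b i \<and> {a i..b i} \<subseteq> S) \<and>
        (\<forall>i<n. \<forall>j<n. i \<noteq> j \<longrightarrow> b i \<le> a j \<or> b j \<le> a i) \<and>
        (\<Sum>i<(n::nat). b i - a i) < d \<longrightarrow> (\<Sum>i<n. \<bar>x0 + v * b i - (x0 + v * a i)\<bar>) < e"
  proof (intro exI[of _ "e / (\<bar>v\<bar> + 1)"] conjI allI impI)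
    show "e / (\<bar>v\<bar> + 1) > 0" using e by simp
    fix n :: nat and a b :: "nat \<Rightarrow> real"
    assume A: "(\<forall>i<n. a i \<le> b i \<and> {a i..b i} \<subseteq> S) \<and>
        (\<forall>i<n. \<forall>j<n. i \<noteq> j \<longrightarrow> b i \<le> a j \<or> b j \<le> a i) \<and> (\<Sum>i<n. b i - a i) < e / (\<bar>v\<bar> + 1)"
    have "(\<Sum>i<n. \<bar>x0 + v * b i - (x0 + v * a i)\<bar>) = \<bar>v\<bar> * (\<Sum>i<n. b i - a i)"
      unfolding sum_distrib_left
      by (rule sum.cong) (use A in \<open>auto simp: abs_mult right_diff_distrib[symmetric]\<close>)
    also have "\<dots> \<le> (\<bar>v\<bar> + 1) * (\<Sum>i<n. b i - a i)"
      by (rule mult_right_mono) (use A in \<open>auto intro: sum_nonneg\<close>)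
    also have "\<dots> < (\<bar>v\<bar> + 1) * (e / (\<bar>v\<bar> + 1))"
      by (rule mult_strict_left_mono) (use A in auto)
    finally show "(\<Sum>i<n. \<bar>x0 + v * b i - (x0 + v * a i)\<bar>) < e" by simp
  qed
qed

lemma vector_derivative_shift:
  fixes \<gamma> :: "real \<Rightarrow> real"
  shows "vector_derivative (\<lambda>t. \<gamma> (t + s)) (at t) = vector_derivative \<gamma> (at (t + s))"
proof -
  have "((\<lambda>t. \<gamma> (t + s)) has_vector_derivative D) (at t) \<longleftrightarrow> (\<gamma> has_vector_derivative D) (at (t + s))"
    for D
    by (simp add: has_real_derivative_iff_has_vector_derivative[symmetric] DERIV_shift)
  then show ?thesis unfolding vector_derivative_def by simp
qed

lemma continuous_on_hits_interval_endpoint: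
  fixes \<gamma> :: "real \<Rightarrow> real"
  assumes "continuous_on {0..T} \<gamma>" and "0 \<le> T"
    and "\<gamma> 0 \<notin> {a<..<b}" and "\<gamma> T \<in> {a..b}"
  shows "\<exists>s\<in>{0..T}. \<gamma> s = a \<or> \<gamma> s = b"
proof (cases "\<gamma> 0 \<le> a")
  case True
  then show ?thesis using IVT'[of \<gamma> 0 a T] assms by auto
next
  case False
  then have "b \<le> \<gamma> 0" using assms(3) by auto
  then show ?thesis using IVT2'[of \<gamma> T b 0] assms by auto
qed

definition lagr_along :: "(real \<Rightarrow> real) \<Rightarrow> (real \<Rightarrow> real) \<Rightarrow> real \<Rightarrow> real" where
  "lagr_along U \<gamma> t = lagr U (vector_derivative \<gamma> (at t)) (\<gamma> t)"

lemma action_eq_integral_lagr_along: "action U T \<gamma> = integral {0..T} (lagr_along U \<gamma>)"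
  unfolding action_def lagr_along_def by simp

lemma admissible_iff_lagr_along:
  "admissible U T \<gamma> \<longleftrightarrow> T \<ge> 0 \<and> abs_cont_on {0..T} \<gamma> \<and> lagr_along U \<gamma> integrable_on {0..T}"
  unfolding admissible_def lagr_along_def by simp

lemma action_nonneg: "admissible U T \<gamma> \<Longrightarrow> action U T \<gamma> \<ge> 0"
  unfolding admissible_iff_lagr_along action_eq_integral_lagr_along
  by (intro integral_nonneg) (auto simp: lagr_along_def lagr_def)

lemma admissible_split:
  assumes adm: "admissible U T \<gamma>" and s: "0 \<le> s" "s \<le> T"
  shows "admissible U s \<gamma>"
    and "admissible U (T - s) (\<lambda>t. \<gamma> (t + s))"
    and "action U T \<gamma> = action U s \<gamma> + action U (T - s) (\<lambda>t. \<gamma> (t + s))"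
proof -
  have ac: "abs_cont_on {0..T} \<gamma>" and int: "lagr_along U \<gamma> integrable_on {0..T}"
    using adm unfolding admissible_iff_lagr_along by auto
  have shift: "lagr_along U (\<lambda>t. \<gamma> (t + s)) = lagr_along U \<gamma> \<circ> (+) s"
    by (auto simp: lagr_along_def vector_derivative_shift add.commute)
  have int_tail: "lagr_along U \<gamma> integrable_on {s..T}"
    by (rule integrable_subinterval_real[OF int]) (use s in auto)
  show "admissible U s \<gamma>"
    unfolding admissible_iff_lagr_along
    using s abs_cont_on_compose_monotone_nonexpansive[OF ac, of "\<lambda>t. t" "{0..s}"]
    by (auto intro: integrable_subinterval_real[OF int])
  show "admissible U (T - s) (\<lambda>t. \<gamma> (t + s))"
    unfolding admissible_iff_lagr_along shift integrable_on_shift_Icc_real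
    using s int_tail abs_cont_on_compose_monotone_nonexpansive[OF ac, of "\<lambda>t. t + s" "{0..T - s}"]
    by auto
  have "integral {0..s} (lagr_along U \<gamma>) + integral {s..T} (lagr_along U \<gamma>) =
      integral {0..T} (lagr_along U \<gamma>)"
    by (rule Henstock_Kurzweil_Integration.integral_combine) (use s int in auto)
  then show "action U T \<gamma> = action U s \<gamma> + action U (T - s) (\<lambda>t. \<gamma> (t + s))"
    unfolding action_eq_integral_lagr_along shift integral_shift_Icc_real by simp
qed

(* The corner of the delayed curve at t = \<tau> is excluded; it is negligible for the action. *)
lemma lagr_along_delay:
  assumes "deriv U (\<gamma> 0) = 0" and "t \<noteq> \<tau>"
  shows "lagr_along U (\<lambda>t. \<gamma> (max (t - \<tau>) 0)) t = (if t \<le> \<tau> then 0 else lagr_along U \<gamma> (t - \<tau>))"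
proof (cases "t < \<tau>")
  case True
  have "eventually (\<lambda>r. r \<in> {..<\<tau>}) (nhds t)"
    using True by (intro eventually_nhds_in_open) auto
  then have "eventually (\<lambda>r. r \<in> UNIV \<longrightarrow> \<gamma> (max (r - \<tau>) 0) = \<gamma> 0) (nhds t)"
    by eventually_elim auto
  then have "vector_derivative (\<lambda>t. \<gamma> (max (t - \<tau>) 0)) (at t) = vector_derivative (\<lambda>_. \<gamma> 0) (at t)"
    by (rule vector_derivative_cong_eq) auto
  then show ?thesis using True assms(1) by (simp add: lagr_along_def lagr_def)
next
  case False
  then have t: "t > \<tau>" using assms(2) by simp
  have "eventually (\<lambda>r. r \<in> {\<tau><..}) (nhds t)"
    using t by (intro eventually_nhds_in_open) auto
  then have "eventually (\<lambda>r. r \<in> UNIV \<longrightarrow> \<gamma> (max (r - \<tau>) 0) = \<gamma> (r + - \<tau>)) (nhds t)"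
    by eventually_elim auto
  then have "vector_derivative (\<lambda>t. \<gamma> (max (t - \<tau>) 0)) (at t) =
      vector_derivative (\<lambda>r. \<gamma> (r + - \<tau>)) (at t)"
    by (rule vector_derivative_cong_eq) auto
  then show ?thesis using t vector_derivative_shift[of \<gamma> "- \<tau>" t] by (simp add: lagr_along_def)
qed

lemma admissible_delay:
  assumes adm: "admissible U T \<gamma>" and crit: "deriv U (\<gamma> 0) = 0" and \<tau>: "\<tau> \<ge> 0"
  shows "admissible U (T + \<tau>) (\<lambda>t. \<gamma> (max (t - \<tau>) 0))"
    and "action U (T + \<tau>) (\<lambda>t. \<gamma> (max (t - \<tau>) 0)) = action U T \<gamma>"
proof -
  define g where "g = (\<lambda>t. if t \<le> \<tau> then 0 else lagr_along U \<gamma> (t - \<tau>))"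
  have ac: "abs_cont_on {0..T} \<gamma>" and T: "T \<ge> 0"
    and int: "(lagr_along U \<gamma> has_integral action U T \<gamma>) {0..T}"
    using adm unfolding admissible_iff_lagr_along action_eq_integral_lagr_along by auto
  have rest: "(g has_integral 0) {0..\<tau>}"
    by (rule has_integral_eq[OF _ has_integral_0]) (auto simp: g_def)
  have "((lagr_along U \<gamma> \<circ> (+) (- \<tau>)) has_integral action U T \<gamma>) {\<tau>..T + \<tau>}"
    unfolding has_integral_shift_Icc_real using int by simp
  then have move: "(g has_integral action U T \<gamma>) {\<tau>..T + \<tau>}"
    by (rule has_integral_spike[OF negligible_sing[of \<tau>], rotated]) (auto simp: g_def)
  have "(g has_integral 0 + action U T \<gamma>) {0..T + \<tau>}"
    by (rule has_integral_combine[OF _ _ rest move]) (use \<tau> T in auto)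
  then have "(lagr_along U (\<lambda>t. \<gamma> (max (t - \<tau>) 0)) has_integral action U T \<gamma>) {0..T + \<tau>}"
    unfolding add_0 by (rule has_integral_spike[OF negligible_sing[of \<tau>], rotated])
       (auto simp: g_def lagr_along_delay[of U \<gamma>, OF crit])
  moreover have "abs_cont_on {0..T + \<tau>} (\<lambda>t. \<gamma> (max (t - \<tau>) 0))"
    by (rule abs_cont_on_compose_monotone_nonexpansive[OF ac]) (use \<tau> T in auto)
  ultimately show "admissible U (T + \<tau>) (\<lambda>t. \<gamma> (max (t - \<tau>) 0))"
    and "action U (T + \<tau>) (\<lambda>t. \<gamma> (max (t - \<tau>) 0)) = action U T \<gamma>"
    unfolding admissible_iff_lagr_along action_eq_integral_lagr_along
    using \<tau> T by (auto simp: integral_unique has_integral_integrable)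
qed

lemma line_barrier_le_action:
  assumes "admissible U T \<gamma>" "\<gamma> 0 = x" "\<gamma> T = y"
  shows "line_barrier U y x \<le> action U T \<gamma>"
  unfolding line_barrier_def
  by (rule cInf_lower) (use assms in \<open>auto intro!: bdd_belowI[of _ 0] action_nonneg\<close>)

lemma circ_min_action_le_action:
  assumes adm: "admissible U T \<gamma>" and "\<gamma> 0 = x" and "deriv U x = 0" and "T \<le> T'"
  shows "circ_min_action U T' (\<gamma> T) x \<le> action U T \<gamma>"
proof -
  define \<tau> where "\<tau> = T' - T"
  have "\<tau> \<ge> 0" "T + \<tau> = T'" using assms by (auto simp: \<tau>_def)
  note delay = admissible_delay[OF adm _ \<open>\<tau> \<ge> 0\<close>, unfolded \<open>T + \<tau> = T'\<close>]
  have "T \<ge> 0" using adm unfolding admissible_def by simp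
  then show ?thesis
    unfolding circ_min_action_def using assms delay \<open>\<tau> \<ge> 0\<close>
    by (intro cInf_lower bdd_belowI[of _ 0])
       (auto intro!: action_nonneg exI[of _ "\<lambda>t. \<gamma> (max (t - \<tau>) 0)"] exI[of _ 0] simp: \<tau>_def)
qed

lemma peierls_le_action:
  assumes "admissible U T \<gamma>" and "\<gamma> 0 = x" and "deriv U x = 0"
  shows "peierls U (\<gamma> T) x \<le> ereal (action U T \<gamma>)"
proof -
  have "eventually (\<lambda>T'. ereal (circ_min_action U T' (\<gamma> T) x) \<le> ereal (action U T \<gamma>)) at_top"
    using eventually_ge_at_top[of T] by eventually_elim (use circ_min_action_le_action assms in auto)
  then have "peierls U (\<gamma> T) x \<le> Liminf at_top (\<lambda>_::real. ereal (action U T \<gamma>))"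
    unfolding peierls_def by (rule Liminf_mono)
  then show ?thesis by (simp add: Liminf_const)
qed

lemma peierls_shift_target: "peierls U (y + of_int n) x = peierls U y x"
proof -
  have "(\<exists>m::int. z = y + of_int n + of_int m) \<longleftrightarrow> (\<exists>m::int. z = y + of_int m)" for z
    by (metis add.assoc add_diff_cancel_left' diff_add_cancel of_int_add)
  then show ?thesis unfolding peierls_def circ_min_action_def by simp
qed

(* U' continuous and 1-periodic means U is C^1 with U(x + 1) - U(x) constant. *)
locale skew_periodic_potential = periodic_fun_simple' "deriv U" for U :: "real \<Rightarrow> real" +
  assumes continuous_deriv: "continuous_on UNIV (deriv U)"
begin

lemma action_add_int: "action U T (\<lambda>t. \<gamma> t + of_int n) = action U T \<gamma>"
  and admissible_add_int: "admissible U T \<gamma> \<Longrightarrow> admissible U T (\<lambda>t. \<gamma> t + of_int n)"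
proof -
  have "vector_derivative (\<lambda>t. \<gamma> t + of_int n) (at t) = vector_derivative \<gamma> (at t)" for t
    using vector_derivative_translate[of "of_int n" \<gamma>] by (simp add: o_def add.commute)
  then have "lagr_along U (\<lambda>t. \<gamma> t + of_int n) = lagr_along U \<gamma>"
    by (auto simp: lagr_along_def lagr_def plus_of_int)
  then show "action U T (\<lambda>t. \<gamma> t + of_int n) = action U T \<gamma>"
    and "admissible U T \<gamma> \<Longrightarrow> admissible U T (\<lambda>t. \<gamma> t + of_int n)"
    unfolding admissible_iff_lagr_along action_eq_integral_lagr_along
    by (auto intro: abs_cont_on_add_const)
qed

lemma admissible_affine:
  assumes "T > 0"
  shows "admissible U T (\<lambda>t. x + ((y - x) / T) * t)"
proof -
  define v where "v = (y - x) / T"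
  have "vector_derivative (\<lambda>t. x + v * t) (at t) = v" for t
    by (auto intro!: vector_derivative_at derivative_eq_intros)
  then have "lagr_along U (\<lambda>t. x + v * t) = (\<lambda>t. (v + deriv U (x + v * t))^2 / 4)"
    by (auto simp: lagr_along_def lagr_def)
  moreover have "(\<lambda>t. (v + deriv U (x + v * t))^2 / 4) integrable_on {0..T}"
    by (intro integrable_continuous_interval continuous_intros
        continuous_on_compose2[OF continuous_deriv]) auto
  ultimately show ?thesis
    unfolding v_def[symmetric] admissible_iff_lagr_along using assms abs_cont_on_affine by auto
qed

lemma circ_min_action_shift_base: "circ_min_action U T y (x + of_int n) = circ_min_action U T y x"
proof -
  define A where "A x = {action U T \<gamma> | \<gamma>. admissible U T \<gamma> \<and> \<gamma> 0 = x \<and> (\<exists>m::int. \<gamma> T = y + of_int m)}"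
    for x
  have sub: "A (x + of_int n) \<subseteq> A x" for x n
  proof
    fix a assume "a \<in> A (x + of_int n)"
    then obtain \<gamma> m where "a = action U T \<gamma>" "admissible U T \<gamma>" "\<gamma> 0 = x + of_int n"
      "\<gamma> T = y + of_int m"
      unfolding A_def by blast
    then show "a \<in> A x"
      unfolding A_def using action_add_int[of T \<gamma> "- n"] admissible_add_int[of T \<gamma> "- n"]
      by (auto intro!: exI[of _ "\<lambda>t. \<gamma> t + of_int (- n)"] exI[of _ "m - n"])
  qed
  have "A x \<subseteq> A (x + of_int n)" using sub[of "x + of_int n" "- n"] by simp
  then have "A (x + of_int n) = A x" using sub by (rule subset_antisym[rotated])
  then show ?thesis unfolding circ_min_action_def A_def[symmetric] by simp
qed

lemma peierls_shift_base: "peierls U y (x + of_int n) = peierls U y x"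
  unfolding peierls_def circ_min_action_shift_base ..

lemma peierls_le_line_barrier:
  assumes "deriv U x = 0"
  shows "peierls U y x \<le> ereal (line_barrier U y (x + of_int n))"
proof -
  define z where "z = x + of_int n"
  define B where "B = {action U T \<gamma> | T \<gamma>. admissible U T \<gamma> \<and> \<gamma> 0 = z \<and> \<gamma> T = y}"
  have "action U 1 (\<lambda>t. z + ((y - z) / 1) * t) \<in> B"
    unfolding B_def using admissible_affine[of 1 z y] by fastforce
  then have "B \<noteq> {}" by blast
  moreover have "bdd_below B"
    unfolding B_def by (auto intro!: bdd_belowI[of _ 0] action_nonneg)
  moreover have "peierls U y z \<le> ereal a" if "a \<in> B" for a
    using that peierls_le_action[of U _ _ z] assms plus_of_int unfolding B_def z_def by fastforce
  ultimately have "peierls U y z \<le> ereal (line_barrier U y z)"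
    unfolding line_barrier_def B_def[symmetric] by (auto simp: ereal_Inf' intro: INF_greatest)
  then show ?thesis unfolding z_def peierls_shift_base .
qed

lemma peierls_lower_bound:
  assumes "\<And>T \<gamma> m. 0 < T \<Longrightarrow> admissible U T \<gamma> \<Longrightarrow> \<gamma> 0 = x \<Longrightarrow> \<gamma> T = y + of_int m \<Longrightarrow>
      c \<le> ereal (action U T \<gamma>)"
  shows "c \<le> peierls U y x"
  unfolding peierls_def
proof (intro Liminf_bounded eventually_mono[OF eventually_gt_at_top[of 0]])
  fix T :: real assume "0 < T"
  define A where "A = {action U T \<gamma> | \<gamma>. admissible U T \<gamma> \<and> \<gamma> 0 = x \<and> (\<exists>m::int. \<gamma> T = y + of_int m)}"
  have "action U T (\<lambda>t. x + ((y - x) / T) * t) \<in> A"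
    unfolding A_def using admissible_affine[OF \<open>0 < T\<close>, of x y] \<open>0 < T\<close>
    by (auto intro!: exI[of _ "\<lambda>t. x + ((y - x) / T) * t"] exI[of _ 0])
  then have "A \<noteq> {}" by blast
  moreover have "bdd_below A"
    unfolding A_def by (auto intro!: bdd_belowI[of _ 0] action_nonneg)
  moreover have "c \<le> ereal a" if "a \<in> A" for a
    using that assms \<open>0 < T\<close> unfolding A_def by blast
  ultimately show "c \<le> ereal (circ_min_action U T y x)"
    unfolding circ_min_action_def A_def[symmetric] by (auto simp: ereal_Inf' intro: INF_greatest)
qed

lemma peierls_plus_line_barrier_le_action:
  assumes adm: "admissible U T \<gamma>" and s: "s \<in> {0..T}"
    and start: "\<gamma> 0 = x" and crit: "deriv U x = 0"
    and via: "\<gamma> s = z + of_int m" and stop: "\<gamma> T = y + of_int m"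
  shows "peierls U z x + ereal (line_barrier U y z) \<le> ereal (action U T \<gamma>)"
proof -
  note split = admissible_split[OF adm, of s]
  define \<delta> where "\<delta> = (\<lambda>t. \<gamma> (t + s) + of_int (- m))"
  have "peierls U z x = peierls U (\<gamma> s) x" using via by (simp add: peierls_shift_target)
  also have "\<dots> \<le> ereal (action U s \<gamma>)"
    using split(1) s start crit by (auto intro: peierls_le_action)
  finally have head: "peierls U z x \<le> ereal (action U s \<gamma>)" .
  have "line_barrier U y z \<le> action U (T - s) \<delta>"
    using split(2) s via stop unfolding \<delta>_def
    by (intro line_barrier_le_action admissible_add_int) auto
  then have tail: "ereal (line_barrier U y z) \<le> ereal (action U (T - s) (\<lambda>t. \<gamma> (t + s)))"
    unfolding \<delta>_def action_add_int by simp
  from add_mono[OF head tail] show ?thesis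
    using split(3) s by simp
qed

end

lemma skew_periodic_setting_imp_potential:
  assumes "skew_periodic_setting U k xm xM"
  shows "skew_periodic_potential U"
proof
  have smooth: "smooth_real U"
    using assms unfolding skew_periodic_setting_def by auto
  obtain Ut b where periodic: "\<And>x. Ut (x + 1) = Ut x" and skew: "\<And>x. U x = Ut x - b * x"
    using assms unfolding skew_periodic_setting_def by auto
  have shift: "U (x + 1) = U x + - b" for x
    using periodic[of x] skew[of x] skew[of "x + 1"] by (simp add: algebra_simps)
  have "(deriv ^^ n) U differentiable (at x)" for n x
    using smooth unfolding smooth_real_def by blast
  from this[of 0] this[of 1]
  have diff: "U differentiable (at x)" and "deriv U differentiable (at x)" for x by auto
  then show "continuous_on UNIV (deriv U)"
    by (intro continuous_at_imp_continuous_on) (auto intro: differentiable_imp_continuous_within)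
  fix x
  have "((\<lambda>y. U (y + 1)) has_real_derivative deriv U (x + 1)) (at x)"
    using diff[of "x + 1"] by (simp add: DERIV_shift[symmetric] DERIV_deriv_iff_real_differentiable)
  moreover have "((\<lambda>y. U y + - b) has_real_derivative deriv U x) (at x)"
    using diff[of x] by (auto intro!: derivative_eq_intros simp: DERIV_deriv_iff_real_differentiable)
  ultimately show "deriv U (x + 1) = deriv U x"
    unfolding shift by (rule DERIV_unique)
qed

context
  fixes U :: "real \<Rightarrow> real" and k :: nat and xm xM :: "int \<Rightarrow> real"
  assumes setting: "skew_periodic_setting U k xm xM"
begin

interpretation skew_periodic_potential U
  using setting by (rule skew_periodic_setting_imp_potential)

lemma deriv_xm: "deriv U (xm i) = 0"
  using setting unfolding skew_periodic_setting_def by blast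

lemma xm_mono:
  assumes "i \<le> j"
  shows "xm i \<le> xm j"
  using assms
proof (induction j rule: int_ge_induct)
  case (step j)
  have "xm j < xM j" "xM (j + 1 - 1) < xm (j + 1)"
    using setting unfolding skew_periodic_setting_def by blast+
  then show ?case using step.IH by simp
qed simp

lemma xm_add_periods: "xm (i + n * int k) = xm i + of_int n"
proof (induction n rule: int_induct[where k = 0])
  case (step1 n)
  have "xm (i + (n + 1) * int k) = xm ((i + n * int k) + int k)" by (simp add: algebra_simps)
  then show ?case using step1.IH setting unfolding skew_periodic_setting_def by simp
next
  case (step2 n)
  have "xm (i + n * int k) = xm ((i + (n - 1) * int k) + int k)" by (simp add: algebra_simps)
  then show ?case using step2.IH setting unfolding skew_periodic_setting_def by simp
qed simp

lemma xm_succ_wrap: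
  assumes "i \<in> {1..int k}"
  shows "xm (i + 1) = xm (if i = int k then 1 else i + 1) + of_int (if i = int k then 1 else 0)"
  using assms xm_add_periods[of 1 1] by (auto simp: add.commute)

lemma xm_not_between: "xm j \<notin> {xm i + of_int m<..<xm (i + 1) + of_int m}"
proof -
  have "xm j = xm (j - m * int k) + of_int m"
    using xm_add_periods[of "j - m * int k" m] by simp
  moreover have "j - m * int k \<le> i \<or> i + 1 \<le> j - m * int k" by linarith
  ultimately show ?thesis using xm_mono by fastforce
qed

lemma peierls_ge_min_neighbours:
  assumes x: "x \<in> {xm i..xm (i + 1)}"
  shows "min (peierls U (xm i) (xm j) + ereal (hR U x (xm i)))
             (peierls U (xm (i + 1)) (xm j) + ereal (hL U x (xm (i + 1))))
         \<le> peierls U x (xm j)"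
proof (rule peierls_lower_bound)
  fix T \<gamma> m assume "0 < T" and adm: "admissible U T \<gamma>"
    and start: "\<gamma> 0 = xm j" and stop: "\<gamma> T = x + of_int m"
  have "continuous_on {0..T} \<gamma>"
    using adm abs_cont_on_imp_continuous_on unfolding admissible_def by blast
  moreover have "\<gamma> 0 \<notin> {xm i + of_int m<..<xm (i + 1) + of_int m}"
    using start xm_not_between by simp
  moreover have "\<gamma> T \<in> {xm i + of_int m..xm (i + 1) + of_int m}"
    using stop x by simp
  ultimately obtain s where s: "s \<in> {0..T}"
    and "\<gamma> s = xm i + of_int m \<or> \<gamma> s = xm (i + 1) + of_int m"
    using continuous_on_hits_interval_endpoint \<open>0 < T\<close> by (metis less_imp_le)
  then show "min (peierls U (xm i) (xm j) + ereal (hR U x (xm i)))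
             (peierls U (xm (i + 1)) (xm j) + ereal (hL U x (xm (i + 1))))
         \<le> ereal (action U T \<gamma>)"
  proof (elim disjE)
    assume "\<gamma> s = xm i + of_int m"
    from peierls_plus_line_barrier_le_action[OF adm s start deriv_xm this stop]
    show ?thesis by (rule order_trans[OF min.cobounded1])
  next
    assume "\<gamma> s = xm (i + 1) + of_int m"
    from peierls_plus_line_barrier_le_action[OF adm s start deriv_xm this stop]
    show ?thesis by (rule order_trans[OF min.cobounded2])
  qed
qed

lemma min_neighbour_barriers_le_peierls:
  assumes x: "x \<in> {xm i..xm (i + 1)}"
    and left: "ereal a \<le> ereal c + peierls U (xm i) (xm j)"
    and right: "ereal b \<le> ereal c + peierls U (xm (i + 1)) (xm j)"
  shows "min (ereal (a + hR U x (xm i))) (ereal (b + hL U x (xm (i + 1))))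
         \<le> ereal c + peierls U x (xm j)"
proof -
  have "ereal (a + hR U x (xm i)) \<le> ereal c + (peierls U (xm i) (xm j) + ereal (hR U x (xm i)))"
    using add_right_mono[OF left, of "ereal (hR U x (xm i))"] by (simp add: add.assoc)
  moreover have "ereal (b + hL U x (xm (i + 1)))
      \<le> ereal c + (peierls U (xm (i + 1)) (xm j) + ereal (hL U x (xm (i + 1))))"
    using add_right_mono[OF right, of "ereal (hL U x (xm (i + 1)))"] by (simp add: add.assoc)
  ultimately have "min (ereal (a + hR U x (xm i))) (ereal (b + hL U x (xm (i + 1))))
      \<le> ereal c + min (peierls U (xm i) (xm j) + ereal (hR U x (xm i)))
                        (peierls U (xm (i + 1)) (xm j) + ereal (hL U x (xm (i + 1))))"
    unfolding min_of_mono[OF mono_add[of "ereal c"], symmetric] by (rule min.mono)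
  also have "\<dots> \<le> ereal c + peierls U x (xm j)"
    using peierls_ge_min_neighbours[OF x] by (rule add_left_mono)
  finally show ?thesis .
qed

end

theorem proposition3p4:
  fixes U :: "real \<Rightarrow> real" and k :: nat and xm xM :: "int \<Rightarrow> real"
    and Wv :: "int \<Rightarrow> real" and W :: "real \<Rightarrow> ereal"
  assumes setting: "skew_periodic_setting U k xm xM"
    and weak_kam: "\<forall>i\<in>{1..int k}.
        ereal (Wv i) = (MIN j\<in>{1..int k}. ereal (Wv j) + peierls U (xm i) (xm j))"
    and W_def: "\<forall>x. W x = (MIN j\<in>{1..int k}. ereal (Wv j) + peierls U x (xm j))"
  shows "\<forall>i\<in>{1..int k}. \<forall>x\<in>{xm i..xm (i + 1)}.
           W x = min (ereal (Wv i + hR U x (xm i)))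
                     (ereal (Wv (if i = int k then 1 else i + 1) + hL U x (xm (i + 1))))"
proof (intro ballI)
  fix i x assume i: "i \<in> {1..int k}" and x: "x \<in> {xm i..xm (i + 1)}"
  interpret skew_periodic_potential U
    using setting by (rule skew_periodic_setting_imp_potential)
  define i' where "i' = (if i = int k then 1 else i + 1)"
  have i': "i' \<in> {1..int k}" using i by (auto simp: i'_def)
  obtain e :: int where succ: "xm (i + 1) = xm i' + of_int e"
    using xm_succ_wrap[OF setting i] unfolding i'_def by blast
  have kam: "ereal (Wv a) \<le> ereal (Wv j) + peierls U (xm a + of_int n) (xm j)"
    if "a \<in> {1..int k}" "j \<in> {1..int k}" for a j n
    unfolding peierls_shift_target weak_kam[rule_format, OF that(1)]
    by (rule Min_le) (use that(2) in auto)
  have upper: "W x \<le> ereal (Wv a + hR U x (xm a + of_int n))" if "a \<in> {1..int k}" for a n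
  proof -
    have "W x \<le> ereal (Wv a) + peierls U x (xm a)"
      unfolding W_def[rule_format] by (rule Min_le) (use that in auto)
    also have "\<dots> \<le> ereal (Wv a) + ereal (hR U x (xm a + of_int n))"
      by (intro add_left_mono peierls_le_line_barrier deriv_xm[OF setting])
    finally show ?thesis by simp
  qed
  have "min (ereal (Wv i + hR U x (xm i))) (ereal (Wv i' + hL U x (xm (i + 1)))) \<le> W x"
    unfolding W_def[rule_format] using i kam[OF i, of _ 0] kam[OF i', of _ e, folded succ]
    by (intro Min.boundedI) (auto intro!: min_neighbour_barriers_le_peierls[OF setting x])
  with upper[OF i, of 0] upper[OF i', of e, folded succ]
  show "W x = min (ereal (Wv i + hR U x (xm i)))
      (ereal (Wv (if i = int k then 1 else i + 1) + hL U x (xm (i + 1))))"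
    unfolding i'_def[symmetric] by (auto intro: antisym)
qed

end
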